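(* Let $\mathcal A=(\Sigma,Q_\mathcal A,I_\mathcal A,F_\mathcal A,\delta_\mathcal A)$ and $\mathcal B=(\Sigma,Q_\mathcal B,I_\mathcal B,F_\mathcal B,\delta_\mathcal B)$ be NBA, and let $\sqsubseteq$ be either backward direct simulation or backward direct trace inclusion, computed on the disjoint union of $\mathcal A$ and $\mathcal B$. If for every $p\in F_\mathcal A$ there exists $q\in F_\mathcal B$ with $p\sqsubseteq q$, then $\mathcal L(\mathcal A)\subseteq\mathcal L(\mathcal B)$.
   Context: An NBA is $(\Sigma,Q,I,F,\delta)$ with $\delta\subseteq Q\times\Sigma\times Q$, assumed forward and backward complete (every state has, for every symbol, at least one incoming and one outgoing transition with that symbol). Traces $q_0\xrightarrow{\sigma_0}q_1\cdots$ are initial if $q_0\in I$; infinite traces are fair if they visit $F$ infinitely often; $\mathcal L$ is the set of infinite words with an initial fair trace. Backward direct simulation $\sqsubseteq^{\mathrm{bw\text{-}di}}$: in a game from configuration $(p_0,q_0)$, at round $i$ from $(p_i,q_i)$ Spoiler picks a transition $p_{i+1}\xrightarrow{\sigma_i}p_i$, Duplicator answers with $q_{i+1}\xrightarrow{\sigma_i}q_i$; Duplicator wins the infinite play if for all $i$, $p_i\in F\Rightarrow q_i\in F$ and $p_i\in I\Rightarrow q_i\in I$; $p\sqsubseteq^{\mathrm{bw\text{-}di}}q$ iff Duplicator has a winning strategy from $(p,q)$. Backward direct trace inclusion: $p\subseteq^{\mathrm{bw\text{-}di}}q$ iff for every finite word $\sigma_0\cdots\sigma_{m-1}$ and every initial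 finite trace $p_0\xrightarrow{\sigma_0}\cdots\xrightarrow{\sigma_{m-1}}p_m=p$ there is an initial finite trace $q_0\xrightarrow{\sigma_0}\cdots\xrightarrow{\sigma_{m-1}}q_m=q$ with $p_i\in F\Rightarrow q_i\in F$ for all $0\le i\le m$. *)

theory Defs
  imports Main "HOL-Library.Infinite_Set"
begin

record ('s, 'a) nba =
  alph   :: "'a set"
  states :: "'s set"
  init   :: "'s set"
  final  :: "'s set"
  trans  :: "('s \<times> 'a \<times> 's) set"

definition nba :: "('s, 'a) nba \<Rightarrow> bool" where
  "nba A \<longleftrightarrow> finite (states A) \<and> finite (alph A)
     \<and> init A \<subseteq> states A \<and> final A \<subseteq> states A
     \<and> trans A \<subseteq> states A \<times> alph A \<times> states A
     \<and> (\<forall>q\<in>states A. \<forall>a\<in>alph A. \<exists>q'. (q, a, q') \<in> trans A)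
     \<and> (\<forall>q\<in>states A. \<forall>a\<in>alph A. \<exists>q'. (q', a, q) \<in> trans A)"

definition lang :: "('s, 'a) nba \<Rightarrow> (nat \<Rightarrow> 'a) set" where
  "lang A = {w. \<exists>r. r 0 \<in> init A \<and> (\<forall>i. (r i, w i, r (Suc i)) \<in> trans A)
                    \<and> (\<exists>\<^sub>\<infinity>i. r i \<in> final A)}"

definition nba_union :: "('s, 'a) nba \<Rightarrow> ('t, 'a) nba \<Rightarrow> ('s + 't, 'a) nba" where
  "nba_union A B = \<lparr> alph = alph A \<union> alph B,
     states = Inl ` states A \<union> Inr ` states B,
     init = Inl ` init A \<union> Inr ` init B,
     final = Inl ` final A \<union> Inr ` final B,
     trans = (\<lambda>(p, a, q). (Inl p, a, Inl q)) ` trans A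
           \<union> (\<lambda>(p, a, q). (Inr p, a, Inr q)) ` trans B \<rparr>"

text \<open>A Duplicator strategy maps the history of
  configurations (p_0,q_0),...,(p_i,q_i), the history of symbols sigma_0..sigma_{i-1},
  and Spoiler's current move (sigma_i, p_{i+1}) to Duplicator's answer q_{i+1}.\<close>
definition bw_di_play ::
  "('s, 'a) nba \<Rightarrow> (('s \<times> 's) list \<Rightarrow> 'a list \<Rightarrow> 'a \<Rightarrow> 's \<Rightarrow> 's)
    \<Rightarrow> 's \<Rightarrow> 's \<Rightarrow> (nat \<Rightarrow> 's) \<Rightarrow> (nat \<Rightarrow> 's) \<Rightarrow> (nat \<Rightarrow> 'a) \<Rightarrow> bool" where
  "bw_di_play A strat p q ps qs ws \<longleftrightarrow>
     ps 0 = p \<and> qs 0 = q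
     \<and> (\<forall>i. (ps (Suc i), ws i, ps i) \<in> trans A)
     \<and> (\<forall>i. qs (Suc i) = strat (map (\<lambda>j. (ps j, qs j)) [0..<Suc i]) (map ws [0..<i])
                                 (ws i) (ps (Suc i)))"

definition bw_di_winning :: "('s, 'a) nba \<Rightarrow> (nat \<Rightarrow> 's) \<Rightarrow> (nat \<Rightarrow> 's) \<Rightarrow> (nat \<Rightarrow> 'a) \<Rightarrow> bool" where
  "bw_di_winning A ps qs ws \<longleftrightarrow>
     (\<forall>i. (qs (Suc i), ws i, qs i) \<in> trans A)
     \<and> (\<forall>i. (ps i \<in> final A \<longrightarrow> qs i \<in> final A) \<and> (ps i \<in> init A \<longrightarrow> qs i \<in> init A))"

definition bw_di_sim :: "('s, 'a) nba \<Rightarrow> 's \<Rightarrow> 's \<Rightarrow> bool" where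
  "bw_di_sim A p q \<longleftrightarrow>
     (\<exists>strat. \<forall>ps qs ws. bw_di_play A strat p q ps qs ws \<longrightarrow> bw_di_winning A ps qs ws)"

definition bw_di_trinc :: "('s, 'a) nba \<Rightarrow> 's \<Rightarrow> 's \<Rightarrow> bool" where
  "bw_di_trinc A p q \<longleftrightarrow>
     (\<forall>(w :: 'a list) ps. ps 0 \<in> init A \<and> (\<forall>i < length w. (ps i, w ! i, ps (Suc i)) \<in> trans A)
        \<and> ps (length w) = p \<longrightarrow>
       (\<exists>qs. qs 0 \<in> init A \<and> (\<forall>i < length w. (qs i, w ! i, qs (Suc i)) \<in> trans A)
        \<and> qs (length w) = q
        \<and> (\<forall>i \<le> length w. ps i \<in> final A \<longrightarrow> qs i \<in> final A)))"

end

theory Submission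
  imports Defs
begin

text \<open>An accepting run \<open>r\<close> of \<open>A\<close> on \<open>w\<close> visits final states at infinitely many
  positions \<open>m\<close>. At each of them the hypothesis yields an initial trace of \<open>B\<close> on the first
  \<open>m\<close> letters of \<open>w\<close> that is final wherever \<open>r\<close> is: for trace inclusion directly, and for
  simulation because Duplicator's answers to Spoiler replaying \<open>r\<close> backwards form such a
  trace. These finite traces have unbounded length and pass through finitely many states, so
  K\<ouml>nig's lemma turns them into an infinite initial trace of \<open>B\<close> that is final wherever
  \<open>r\<close> is, and hence fair.\<close>

lemma koenig:
  fixes G :: "nat \<Rightarrow> (nat \<Rightarrow> 'b) \<Rightarrow> bool"
  assumes "finite S"
    and values_in: "\<And>n f i. G n f \<Longrightarrow> i \<le> n \<Longrightarrow> f i \<in> S"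
    and prefix_closed: "\<And>m n f. G n f \<Longrightarrow> m \<le> n \<Longrightarrow> G m f"
    and local: "\<And>n f g. G n f \<Longrightarrow> (\<And>i. i \<le> n \<Longrightarrow> g i = f i) \<Longrightarrow> G n g"
    and unbounded: "\<And>n. \<exists>f. G n f"
  shows "\<exists>g. \<forall>n. G n g"
proof -
  define extendable where "extendable m h \<longleftrightarrow> (\<forall>n\<ge>m. \<exists>f. G n f \<and> (\<forall>i<m. f i = h i))" for m h
  have extend: "\<exists>h'. extendable (Suc m) h' \<and> (\<forall>i<m. h' i = h i)"
    if ext: "extendable m h" for m h
  proof -
    let ?T = "\<lambda>q. {n. \<exists>f. G n f \<and> (\<forall>i<m. f i = h i) \<and> f m = q}"
    have "{m..} \<subseteq> (\<Union>q\<in>S. ?T q)"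
    proof
      fix n assume "n \<in> {m..}"
      then obtain f where "G n f" "\<forall>i<m. f i = h i" using ext unfolding extendable_def by auto
      moreover have "f m \<in> S" using values_in \<open>G n f\<close> \<open>n \<in> {m..}\<close> by simp
      ultimately show "n \<in> (\<Union>q\<in>S. ?T q)" by blast
    qed
    then have "infinite (\<Union>q\<in>S. ?T q)" using infinite_Ici finite_subset by blast
    then obtain q where "infinite (?T q)" using \<open>finite S\<close> by blast
    have "extendable (Suc m) (h(m := q))"
      unfolding extendable_def
    proof (intro allI impI)
      fix n assume "Suc m \<le> n"
      obtain n' f where "n \<le> n'" "G n' f" "\<forall>i<m. f i = h i" "f m = q"
        using \<open>infinite (?T q)\<close> unfolding infinite_nat_iff_unbounded_le by blast
      then have "G n f" "\<forall>i<Suc m. f i = (h(m := q)) i"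
        using prefix_closed[of n' f n] by (auto simp: less_Suc_eq)
      then show "\<exists>f. G n f \<and> (\<forall>i<Suc m. f i = (h(m := q)) i)" by blast
    qed
    then show ?thesis by auto
  qed
  have "extendable 0 h" for h using unbounded unfolding extendable_def by simp
  then obtain hs where hs: "\<And>m. extendable m (hs m)" and agree: "\<And>m i. i < m \<Longrightarrow> hs (Suc m) i = hs m i"
    using dependent_nat_choice[of extendable "\<lambda>m h h'. \<forall>i<m. h' i = h i"] extend by metis
  have stable: "hs k i = hs (Suc i) i" if "Suc i \<le> k" for i k
    using that by (induction k rule: dec_induct) (simp_all add: agree)
  have "G n (\<lambda>i. hs (Suc i) i)" for n
  proof -
    obtain f where "G (Suc n) f" "\<forall>i<Suc n. f i = hs (Suc n) i"
      using hs[of "Suc n"] unfolding extendable_def by blast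
    then have "G n f" using prefix_closed[of "Suc n" f n] by simp
    moreover have "hs (Suc i) i = f i" if "i \<le> n" for i
      using \<open>\<forall>i<Suc n. f i = hs (Suc n) i\<close> stable[of i "Suc n"] that by simp
    ultimately show ?thesis by (rule local)
  qed
  then show ?thesis by blast
qed

lemma nba_trans_states:
  "nba A \<Longrightarrow> (p, a, q) \<in> trans A \<Longrightarrow> p \<in> states A \<and> a \<in> alph A \<and> q \<in> states A"
  unfolding nba_def by blast

lemma nba_backward_complete:
  "nba A \<Longrightarrow> q \<in> states A \<Longrightarrow> a \<in> alph A \<Longrightarrow> \<exists>p. (p, a, q) \<in> trans A"
  unfolding nba_def by blast

lemma nba_backward_path:
  assumes "nba A" and "a \<in> alph A" and "x \<in> states A"
  shows "\<exists>c. c 0 = x \<and> (\<forall>i. (c (Suc i), a, c i) \<in> trans A)"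
proof -
  have "\<exists>c. \<forall>i. (c i \<in> states A \<and> (i = 0 \<longrightarrow> c i = x)) \<and> (c (Suc i), a, c i) \<in> trans A"
  proof (rule dependent_nat_choice)
    show "\<exists>y. y \<in> states A \<and> (0 = 0 \<longrightarrow> y = x)" using assms(3) by blast
    show "\<exists>y. (y \<in> states A \<and> (Suc i = 0 \<longrightarrow> y = x)) \<and> (y, a, z) \<in> trans A"
      if "z \<in> states A \<and> (i = 0 \<longrightarrow> z = x)" for z i
      using nba_backward_complete[OF assms(1) _ assms(2)] nba_trans_states[OF assms(1)] that
      by blast
  qed
  then show ?thesis by blast
qed

lemma nba_union_simps [simp]:
  "(Inl p, a, Inl p') \<in> trans (nba_union A B) \<longleftrightarrow> (p, a, p') \<in> trans A"
  "(Inr q, a, Inr q') \<in> trans (nba_union A B) \<longleftrightarrow> (q, a, q') \<in> trans B"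
  "Inl p \<in> init (nba_union A B) \<longleftrightarrow> p \<in> init A"
  "Inr q \<in> init (nba_union A B) \<longleftrightarrow> q \<in> init B"
  "Inl p \<in> final (nba_union A B) \<longleftrightarrow> p \<in> final A"
  "Inr q \<in> final (nba_union A B) \<longleftrightarrow> q \<in> final B"
  unfolding nba_union_def by (auto simp: image_iff; force)+

lemma nba_union_trans_into_Inr:
  "(x, a, Inr q) \<in> trans (nba_union A B) \<Longrightarrow> x \<in> range Inr"
  unfolding nba_union_def by auto

lemma nba_nba_union:
  assumes "nba A" and "nba B" and "alph A = alph B"
  shows "nba (nba_union A B)"
proof -
  let ?U = "nba_union A B"
  have states: "states ?U = Inl ` states A \<union> Inr ` states B" and alph: "alph ?U = alph A"
    using assms(3) by (simp_all add: nba_union_def)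
  have "\<exists>y. (x, a, y) \<in> trans ?U \<and> (\<exists>y'. (y', a, x) \<in> trans ?U)"
    if "x \<in> states ?U" and "a \<in> alph ?U" for x a
  proof -
    from that consider p where "x = Inl p" "p \<in> states A" "a \<in> alph A"
      | q where "x = Inr q" "q \<in> states B" "a \<in> alph B"
      unfolding states alph using assms(3) by auto
    then show ?thesis
    proof cases
      case 1
      then obtain p' p'' where "(p, a, p') \<in> trans A" "(p'', a, p) \<in> trans A"
        using assms(1) unfolding nba_def by blast
      then have "(Inl p, a, Inl p') \<in> trans ?U" "(Inl p'', a, Inl p) \<in> trans ?U" by simp_all
      then show ?thesis using 1 by blast
    next
      case 2
      then obtain q' q'' where "(q, a, q') \<in> trans B" "(q'', a, q) \<in> trans B"
        using assms(2) unfolding nba_def by blast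
      then have "(Inr q, a, Inr q') \<in> trans ?U" "(Inr q'', a, Inr q) \<in> trans ?U" by simp_all
      then show ?thesis using 2 by blast
    qed
  qed
  moreover have "trans ?U \<subseteq> states ?U \<times> alph ?U \<times> states ?U"
    using assms unfolding nba_def nba_union_def by auto
  moreover have "init ?U \<subseteq> states ?U" "final ?U \<subseteq> states ?U"
    using assms unfolding nba_def nba_union_def by auto
  moreover have "finite (states ?U)" "finite (alph ?U)"
    using assms unfolding nba_def states alph by simp_all
  ultimately show ?thesis unfolding nba_def by blast
qed

fun bw_di_answers ::
  "(('s \<times> 's) list \<Rightarrow> 'a list \<Rightarrow> 'a \<Rightarrow> 's \<Rightarrow> 's) \<Rightarrow> 's \<Rightarrow> (nat \<Rightarrow> 's) \<Rightarrow> (nat \<Rightarrow> 'a) \<Rightarrow> nat \<Rightarrow> 's"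
where
  "bw_di_answers strat q ps ws 0 = q"
| "bw_di_answers strat q ps ws (Suc i) =
     strat (map (\<lambda>j. (ps j, bw_di_answers strat q ps ws j)) [0..<Suc i]) (map ws [0..<i]) (ws i) (ps (Suc i))"

lemma bw_di_play_answers:
  assumes "ps 0 = p" and "\<And>i. (ps (Suc i), ws i, ps i) \<in> trans A"
  shows "bw_di_play A strat p q ps (bw_di_answers strat q ps ws) ws"
  using assms unfolding bw_di_play_def by (simp del: upt_Suc)

lemma bw_di_sim_imp_trinc:
  assumes "nba A" and "a \<in> alph A" and "bw_di_sim A p q"
  shows "bw_di_trinc A p q"
  unfolding bw_di_trinc_def
proof (intro allI impI)
  fix w ps
  assume "ps 0 \<in> init A \<and> (\<forall>i < length w. (ps i, w ! i, ps (Suc i)) \<in> trans A) \<and> ps (length w) = p"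
  then have ps0: "ps 0 \<in> init A" and pst: "\<And>i. i < length w \<Longrightarrow> (ps i, w ! i, ps (Suc i)) \<in> trans A"
    and psm: "ps (length w) = p" by auto
  let ?m = "length w"
  obtain strat where win: "\<And>sp dq ws. bw_di_play A strat p q sp dq ws \<Longrightarrow> bw_di_winning A sp dq ws"
    using assms(3) unfolding bw_di_sim_def by blast
  have "ps 0 \<in> states A" using ps0 assms(1) unfolding nba_def by blast
  then obtain c where c0: "c 0 = ps 0" and ct: "\<And>i. (c (Suc i), a, c i) \<in> trans A"
    using nba_backward_path[OF assms(1,2)] by blast
  \<comment> \<open>Spoiler replays the given trace backwards and then continues along \<open>c\<close>.\<close>
  define sp where "sp i = (if i \<le> ?m then ps (?m - i) else c (i - ?m))" for i
  define ws where "ws i = (if i < ?m then w ! (?m - Suc i) else a)" for i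
  have "(sp (Suc i), ws i, sp i) \<in> trans A" for i
  proof (cases "i < ?m")
    case True
    then have "Suc (?m - Suc i) = ?m - i" by simp
    then show ?thesis using pst[of "?m - Suc i"] True by (simp add: sp_def ws_def)
  next
    case False
    then have "Suc i - ?m = Suc (i - ?m)" and "sp i = c (i - ?m)"
      using c0 by (auto simp: sp_def)
    then show ?thesis using ct[of "i - ?m"] False by (simp add: sp_def ws_def)
  qed
  then have "bw_di_winning A sp (bw_di_answers strat q sp ws) ws"
    by (intro win bw_di_play_answers) (simp add: sp_def psm)
  then obtain dq where dq0: "dq 0 = q" and dqt: "\<And>i. (dq (Suc i), ws i, dq i) \<in> trans A"
    and dqf: "\<And>i. sp i \<in> final A \<Longrightarrow> dq i \<in> final A"
    and dqi: "\<And>i. sp i \<in> init A \<Longrightarrow> dq i \<in> init A"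
    unfolding bw_di_winning_def by (metis bw_di_answers.simps(1))
  define qs where "qs i = dq (?m - i)" for i
  have "qs 0 \<in> init A" using dqi[of ?m] ps0 by (simp add: qs_def sp_def)
  moreover have "(qs i, w ! i, qs (Suc i)) \<in> trans A" if "i < ?m" for i
  proof -
    have "Suc (?m - Suc i) = ?m - i" and "ws (?m - Suc i) = w ! i"
      using that by (auto simp: ws_def)
    then show ?thesis using dqt[of "?m - Suc i"] by (simp add: qs_def)
  qed
  moreover have "qs ?m = q" using dq0 by (simp add: qs_def)
  moreover have "qs i \<in> final A" if "i \<le> ?m" and "ps i \<in> final A" for i
    using dqf[of "?m - i"] that by (simp add: qs_def sp_def)
  ultimately show "\<exists>qs. qs 0 \<in> init A \<and> (\<forall>i < ?m. (qs i, w ! i, qs (Suc i)) \<in> trans A)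
      \<and> qs ?m = q \<and> (\<forall>i \<le> ?m. ps i \<in> final A \<longrightarrow> qs i \<in> final A)"
    by (intro exI[of _ qs]) blast
qed

definition covering_prefix ::
  "('t, 'a) nba \<Rightarrow> (nat \<Rightarrow> 'a) \<Rightarrow> (nat \<Rightarrow> bool) \<Rightarrow> nat \<Rightarrow> (nat \<Rightarrow> 't) \<Rightarrow> bool" where
  "covering_prefix B w P n f \<longleftrightarrow> f 0 \<in> init B \<and> (\<forall>i<n. (f i, w i, f (Suc i)) \<in> trans B)
     \<and> (\<forall>i\<le>n. P i \<longrightarrow> f i \<in> final B)"

lemma covering_prefix_mono:
  "covering_prefix B w P n f \<Longrightarrow> m \<le> n \<Longrightarrow> covering_prefix B w P m f"
  unfolding covering_prefix_def by auto

lemma bw_di_trinc_union_covering_prefix: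
  assumes trinc: "bw_di_trinc (nba_union A B) (Inl (r n)) (Inr q)"
    and "r 0 \<in> init A" and "\<forall>i. (r i, w i, r (Suc i)) \<in> trans A"
  shows "\<exists>f. covering_prefix B w (\<lambda>i. r i \<in> final A) n f"
proof -
  let ?U = "nba_union A B"
  have "(Inl \<circ> r) 0 \<in> init ?U
      \<and> (\<forall>i < length (map w [0..<n]). ((Inl \<circ> r) i, map w [0..<n] ! i, (Inl \<circ> r) (Suc i)) \<in> trans ?U)
      \<and> (Inl \<circ> r) (length (map w [0..<n])) = Inl (r n)"
    using assms(2,3) by simp
  from trinc[unfolded bw_di_trinc_def, rule_format, OF this]
  obtain qs where q0: "qs 0 \<in> init ?U" and qt: "\<And>i. i < n \<Longrightarrow> (qs i, w i, qs (Suc i)) \<in> trans ?U"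
    and qn: "qs n = Inr q" and qf: "\<And>i. i \<le> n \<Longrightarrow> r i \<in> final A \<Longrightarrow> qs i \<in> final ?U"
    by auto
  have Inr: "qs i \<in> range Inr" if "i \<le> n" for i
    using that
  proof (induction i rule: inc_induct)
    case base
    then show ?case using qn by simp
  next
    case (step i)
    then obtain p where "(qs i, w i, Inr p) \<in> trans ?U" using qt by fastforce
    then show ?case by (rule nba_union_trans_into_Inr)
  qed
  define f where "f = projr \<circ> qs"
  have f: "qs i = Inr (f i)" if "i \<le> n" for i
  proof -
    from Inr[OF that] obtain p where "qs i = Inr p" by blast
    then show ?thesis by (simp add: f_def)
  qed
  have "covering_prefix B w (\<lambda>i. r i \<in> final A) n f"
    unfolding covering_prefix_def
  proof (intro conjI allI impI)
    show "f 0 \<in> init B" using q0 f[of 0] by simp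
    show "(f i, w i, f (Suc i)) \<in> trans B" if "i < n" for i
      using qt[OF that] f[of i] f[of "Suc i"] that by simp
    show "f i \<in> final B" if "i \<le> n" and "r i \<in> final A" for i
      using qf[OF that] f[OF that(1)] by simp
  qed
  then show ?thesis by blast
qed

lemma covering_run_of_prefixes:
  assumes "nba B" and "\<And>n. \<exists>f. covering_prefix B w P n f"
  shows "\<exists>\<rho>. \<rho> 0 \<in> init B \<and> (\<forall>i. (\<rho> i, w i, \<rho> (Suc i)) \<in> trans B) \<and> (\<forall>i. P i \<longrightarrow> \<rho> i \<in> final B)"
proof -
  have states: "f i \<in> states B" if "covering_prefix B w P n f" "i \<le> n" for n f i
  proof (cases i)
    case 0
    then show ?thesis using that \<open>nba B\<close> unfolding covering_prefix_def nba_def by auto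
  next
    case (Suc j)
    then have "(f j, w j, f i) \<in> trans B" using that unfolding covering_prefix_def by auto
    then show ?thesis using nba_trans_states[OF \<open>nba B\<close>] by blast
  qed
  have local: "covering_prefix B w P n g"
    if "covering_prefix B w P n f" "\<And>i. i \<le> n \<Longrightarrow> g i = f i" for n f g
    using that unfolding covering_prefix_def by auto
  have "finite (states B)" using \<open>nba B\<close> unfolding nba_def by simp
  then obtain \<rho> where "\<And>n. covering_prefix B w P n \<rho>"
    using koenig[of "states B" "covering_prefix B w P"] states covering_prefix_mono local assms(2)
    by blast
  then show ?thesis unfolding covering_prefix_def by (meson le_refl lessI)
qed

theorem theorem4p2:
  fixes A :: "('s, 'a) nba" and B :: "('t, 'a) nba"
    and R :: "'s + 't \<Rightarrow> 's + 't \<Rightarrow> bool"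
  assumes "nba A" and "nba B" and "alph A = alph B"
    and "R = bw_di_sim (nba_union A B) \<or> R = bw_di_trinc (nba_union A B)"
    and "\<forall>p \<in> final A. \<exists>q \<in> final B. R (Inl p) (Inr q)"
  shows "lang A \<subseteq> lang B"
proof
  fix w assume "w \<in> lang A"
  then obtain r where r0: "r 0 \<in> init A" and rt: "\<forall>i. (r i, w i, r (Suc i)) \<in> trans A"
    and rf: "\<exists>\<^sub>\<infinity>i. r i \<in> final A" unfolding lang_def by blast
  have "w 0 \<in> alph (nba_union A B)"
    using nba_trans_states[OF assms(1) rt[rule_format, of 0]] by (simp add: nba_union_def)
  then have trinc: "bw_di_trinc (nba_union A B) p q" if "R p q" for p q
    using assms(4) that bw_di_sim_imp_trinc[OF nba_nba_union[OF assms(1-3)]] by blast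
  have "\<exists>f. covering_prefix B w (\<lambda>i. r i \<in> final A) n f" for n
  proof -
    obtain m where "n \<le> m" and "r m \<in> final A" using rf unfolding INFM_nat_le by blast
    then obtain q where "R (Inl (r m)) (Inr q)" using assms(5) by blast
    then obtain f where "covering_prefix B w (\<lambda>i. r i \<in> final A) m f"
      using bw_di_trinc_union_covering_prefix[OF trinc r0 rt] by blast
    then show ?thesis using covering_prefix_mono \<open>n \<le> m\<close> by blast
  qed
  then obtain \<rho> where "\<rho> 0 \<in> init B" and "\<forall>i. (\<rho> i, w i, \<rho> (Suc i)) \<in> trans B"
    and "\<forall>i. r i \<in> final A \<longrightarrow> \<rho> i \<in> final B"
    using covering_run_of_prefixes[OF assms(2)] by blast
  moreover have "\<exists>\<^sub>\<infinity>i. \<rho> i \<in> final B" using rf by (rule INFM_mono) (use calculation in blast)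
  ultimately show "w \<in> lang B" unfolding lang_def by blast
qed

end
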